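(* Let $\pi$ be a projective plane of order $q$ and let $a,b$ be positive integers. The complete bipartite graph $K_{a,b}$ embeds in $\pi$ if and only if either $a,b\le q$, or $\{a,b\}=\{1,q+1\}$ (i.e. the graph is $K_{1,q+1}$).
   Context: $K_{a,b}$ is the complete bipartite graph with classes of sizes $a$ and $b$ (so $K_{a,b}\cong K_{b,a}$). A finite projective plane of order $q$ has $q^2+q+1$ points and lines, $q+1$ points on each line and $q+1$ lines through each point; any two distinct points lie on a unique line and any two lines meet in a unique point. An embedding of a simple graph $G=(V,E)$ into a projective plane is an injective map $\phi$ from $V$ to the points such that the induced map sending an edge $ab$ to the line through $\phi(a),\phi(b)$ is injective on $E$. *)

theory Defs
  imports Main
begin

definition projective_plane :: "'p set \<Rightarrow> 'p set set \<Rightarrow> nat \<Rightarrow> bool" where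
  "projective_plane P L q \<longleftrightarrow>
     q \<ge> 2 \<and> finite P \<and>
     card P = q^2 + q + 1 \<and> card L = q^2 + q + 1 \<and>
     (\<forall>l\<in>L. l \<subseteq> P \<and> card l = q + 1) \<and>
     (\<forall>x\<in>P. card {l\<in>L. x \<in> l} = q + 1) \<and>
     (\<forall>x\<in>P. \<forall>y\<in>P. x \<noteq> y \<longrightarrow> (\<exists>!l. l \<in> L \<and> x \<in> l \<and> y \<in> l)) \<and>
     (\<forall>l\<in>L. \<forall>m\<in>L. l \<noteq> m \<longrightarrow> (\<exists>!x. x \<in> P \<and> x \<in> l \<and> x \<in> m))"

definition line_through :: "'p set set \<Rightarrow> 'p set \<Rightarrow> 'p set" where
  "line_through L S = (THE l. l \<in> L \<and> S \<subseteq> l)"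

text \<open>Embedding of a simple graph (V,E), edges being 2-element subsets of V.\<close>
definition graph_embeds :: "'v set \<Rightarrow> 'v set set \<Rightarrow> 'p set \<Rightarrow> 'p set set \<Rightarrow> bool" where
  "graph_embeds V E P L \<longleftrightarrow>
     (\<exists>\<phi>. \<phi> ` V \<subseteq> P \<and> inj_on \<phi> V \<and> inj_on (\<lambda>e. line_through L (\<phi> ` e)) E)"

definition Kab_vertices :: "nat \<Rightarrow> nat \<Rightarrow> (nat + nat) set" where
  "Kab_vertices a b = Inl ` {..<a} \<union> Inr ` {..<b}"

definition Kab_edges :: "nat \<Rightarrow> nat \<Rightarrow> (nat + nat) set set" where
  "Kab_edges a b = {{Inl i, Inr j} | i j. i < a \<and> j < b}"

end

theory Submission
  imports Defs
begin

(* An embedding of K_{a,b} amounts to injective placements f, g of the two classes, with disjoint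
   images, such that the lines f i g j are pairwise distinct. For fixed j all these lines pass
   through g j, so a \<le> q + 1; if a = q + 1 they exhaust the q + 1 lines through g j, so the line
   g j g j' is some f i g j, and then f i g j = f i g j' contradicts distinctness. Conversely, for
   a, b \<le> q place the classes on two lines l, m minus their common point: the line through
   f i \<in> l and g j \<in> m meets l only in f i and m only in g j. For K_{1,q+1} take a point x and
   one further point on each of the q + 1 lines through x. *)

definition Kab_placement ::
    "'p set \<Rightarrow> 'p set set \<Rightarrow> nat \<Rightarrow> nat \<Rightarrow> (nat \<Rightarrow> 'p) \<Rightarrow> (nat \<Rightarrow> 'p) \<Rightarrow> bool" where
  "Kab_placement P L a b f g \<longleftrightarrow>
     f ` {..<a} \<subseteq> P \<and> g ` {..<b} \<subseteq> P \<and> inj_on f {..<a} \<and> inj_on g {..<b} \<and>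
     (\<forall>i<a. \<forall>j<b. f i \<noteq> g j) \<and>
     inj_on (\<lambda>(i, j). line_through L {f i, g j}) ({..<a} \<times> {..<b})"

lemma Kab_placement_swap:
  "Kab_placement P L a b f g \<Longrightarrow> Kab_placement P L b a g f"
  unfolding Kab_placement_def inj_on_def by (auto simp: insert_commute) metis

lemma Kab_edges_iff: "{Inl i, Inr j} \<in> Kab_edges a b \<longleftrightarrow> i < a \<and> j < b"
  by (auto simp: Kab_edges_def doubleton_eq_iff)

lemma graph_embeds_Kab_iff:
  "graph_embeds (Kab_vertices a b) (Kab_edges a b) P L \<longleftrightarrow> (\<exists>f g. Kab_placement P L a b f g)"
proof
  assume "graph_embeds (Kab_vertices a b) (Kab_edges a b) P L"
  then obtain \<phi> where \<phi>: "\<phi> ` Kab_vertices a b \<subseteq> P" "inj_on \<phi> (Kab_vertices a b)"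
      and lines: "inj_on (\<lambda>e. line_through L (\<phi> ` e)) (Kab_edges a b)"
    unfolding graph_embeds_def by blast
  have "inj_on (\<lambda>(i, j). line_through L {\<phi> (Inl i), \<phi> (Inr j)}) ({..<a} \<times> {..<b})"
  proof (rule inj_onI, clarsimp)
    fix i j i' j'
    assume "i < a" "j < b" "i' < a" "j' < b"
      and "line_through L {\<phi> (Inl i), \<phi> (Inr j)} = line_through L {\<phi> (Inl i'), \<phi> (Inr j')}"
    then have "{Inl i, Inr j} = {Inl i', Inr j'}"
      using inj_onD[OF lines] by (simp add: Kab_edges_iff)
    then show "i = i' \<and> j = j'" by (auto simp: doubleton_eq_iff)
  qed
  moreover have "\<phi> (Inl i) \<noteq> \<phi> (Inr j)" if "i < a" "j < b" for i j
    using inj_onD[OF \<phi>(2), of "Inl i" "Inr j"] that by (auto simp: Kab_vertices_def)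
  moreover have "inj_on (\<phi> \<circ> Inl) {..<a}" "inj_on (\<phi> \<circ> Inr) {..<b}"
    using \<phi>(2) by (auto simp: Kab_vertices_def inj_on_def)
  ultimately have "Kab_placement P L a b (\<phi> \<circ> Inl) (\<phi> \<circ> Inr)"
    using \<phi>(1) unfolding Kab_placement_def Kab_vertices_def by auto
  then show "\<exists>f g. Kab_placement P L a b f g" by blast
next
  assume "\<exists>f g. Kab_placement P L a b f g"
  then obtain f g where fg: "Kab_placement P L a b f g" by blast
  have edge: "e \<in> Kab_edges a b \<Longrightarrow> \<exists>i<a. \<exists>j<b. e = {Inl i, Inr j}" for e
    by (auto simp: Kab_edges_def)
  show "graph_embeds (Kab_vertices a b) (Kab_edges a b) P L"
    unfolding graph_embeds_def
  proof (intro exI[of _ "case_sum f g"] conjI)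
    show "case_sum f g ` Kab_vertices a b \<subseteq> P"
      using fg unfolding Kab_placement_def Kab_vertices_def by auto
    show "inj_on (case_sum f g) (Kab_vertices a b)"
    proof (rule inj_onI)
      fix u v assume "u \<in> Kab_vertices a b" "v \<in> Kab_vertices a b" "case_sum f g u = case_sum f g v"
      with fg show "u = v"
        unfolding Kab_placement_def Kab_vertices_def by (auto dest: inj_onD) metis
    qed
    show "inj_on (\<lambda>e. line_through L (case_sum f g ` e)) (Kab_edges a b)"
    proof (rule inj_onI)
      fix e e' assume e: "e \<in> Kab_edges a b" and e': "e' \<in> Kab_edges a b"
        and same_line: "line_through L (case_sum f g ` e) = line_through L (case_sum f g ` e')"
      obtain i j where ij: "i < a" "j < b" "e = {Inl i, Inr j}"
        using edge[OF e] by blast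
      obtain i' j' where ij': "i' < a" "j' < b" "e' = {Inl i', Inr j'}"
        using edge[OF e'] by blast
      have lines: "inj_on (\<lambda>(i, j). line_through L {f i, g j}) ({..<a} \<times> {..<b})"
        using fg unfolding Kab_placement_def by blast
      have "(\<lambda>(i, j). line_through L {f i, g j}) (i, j) = (\<lambda>(i, j). line_through L {f i, g j}) (i', j')"
        using same_line ij ij' by simp
      then have "(i, j) = (i', j')"
        by (rule inj_onD[OF lines]) (use ij ij' in simp_all)
      then show "e = e'" using ij ij' by simp
    qed
  qed
qed

locale finite_projective_plane =
  fixes P :: "'p set" and L :: "'p set set" and q :: nat
  assumes order_ge_2: "q \<ge> 2"
    and finite_points: "finite P"
    and card_points: "card P = q\<^sup>2 + q + 1"
    and card_lines: "card L = q\<^sup>2 + q + 1"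
    and line_subset_points: "l \<in> L \<Longrightarrow> l \<subseteq> P"
    and card_line: "l \<in> L \<Longrightarrow> card l = q + 1"
    and card_lines_through: "x \<in> P \<Longrightarrow> card {l \<in> L. x \<in> l} = q + 1"
    and ex1_line_through: "x \<in> P \<Longrightarrow> y \<in> P \<Longrightarrow> x \<noteq> y \<Longrightarrow> \<exists>!l. l \<in> L \<and> x \<in> l \<and> y \<in> l"
    and ex1_common_point: "l \<in> L \<Longrightarrow> m \<in> L \<Longrightarrow> l \<noteq> m \<Longrightarrow> \<exists>!x. x \<in> P \<and> x \<in> l \<and> x \<in> m"

lemma finite_projective_plane_iff: "finite_projective_plane P L q \<longleftrightarrow> projective_plane P L q"
  unfolding finite_projective_plane_def projective_plane_def by (simp add: ball_conj_distrib Ball_def)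

context finite_projective_plane
begin

lemma finite_lines: "finite L"
  using card_lines by (intro card_ge_0_finite) simp

lemma lines_meet_once:
  assumes "l \<in> L" "m \<in> L" "l \<noteq> m" "x \<in> l" "x \<in> m" "y \<in> l" "y \<in> m"
  shows "x = y"
  using ex1_common_point[OF assms(1-3)] assms(4-) line_subset_points[OF assms(1)] by blast

lemma ex_two_lines: "\<exists>l\<in>L. \<exists>m\<in>L. l \<noteq> m"
proof -
  have "\<not> card L \<le> Suc 0"
    using card_lines order_ge_2 by simp
  then show ?thesis
    using card_le_Suc0_iff_eq[OF finite_lines] by blast
qed

lemma ex_point: "\<exists>x. x \<in> P"
  using card_points by (metis card.empty add_is_0 one_neq_zero ex_in_conv)

lemma ex_other_point_on_line:
  assumes "l \<in> L"
  shows "\<exists>y\<in>l. y \<noteq> x"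
proof (rule ccontr)
  assume "\<not> (\<exists>y\<in>l. y \<noteq> x)"
  then have "card l \<le> card {x}"
    by (intro card_mono) auto
  then show False
    using card_line[OF assms] order_ge_2 by simp
qed

lemma line_through_eq:
  assumes "x \<in> P" "y \<in> P" "x \<noteq> y" "l \<in> L" "x \<in> l" "y \<in> l"
  shows "line_through L {x, y} = l"
proof -
  have "\<exists>!l. l \<in> L \<and> {x, y} \<subseteq> l"
    using ex1_line_through[OF assms(1-3)] by simp
  then show ?thesis
    unfolding line_through_def by (rule the1_equality) (use assms in simp)
qed

lemma line_through_in_lines:
  assumes "x \<in> P" "y \<in> P" "x \<noteq> y"
  shows "line_through L {x, y} \<in> L" "x \<in> line_through L {x, y}" "y \<in> line_through L {x, y}"
proof -
  obtain l where "l \<in> L" "x \<in> l" "y \<in> l"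
    using ex1_line_through[OF assms] by blast
  then show "line_through L {x, y} \<in> L" "x \<in> line_through L {x, y}" "y \<in> line_through L {x, y}"
    using line_through_eq[OF assms] by simp_all
qed

lemma line_through_inter_line:
  assumes "l \<in> L" "x \<in> l" "y \<in> P" "y \<notin> l" "z \<in> l" "z \<in> line_through L {x, y}"
  shows "z = x"
proof -
  have "x \<in> P" "x \<noteq> y"
    using assms line_subset_points by auto
  note n = line_through_in_lines[OF this(1) assms(3) this(2)]
  have "line_through L {x, y} \<noteq> l"
    using n(3) assms(4) by blast
  then show ?thesis
    using lines_meet_once[OF n(1) assms(1)] n(2) assms(2,5,6) by blast
qed

lemma Kab_placement_lines_through_g:
  assumes fg: "Kab_placement P L a b f g" and "j < b"
  shows "inj_on (\<lambda>i. line_through L {f i, g j}) {..<a}"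
    and "(\<lambda>i. line_through L {f i, g j}) ` {..<a} \<subseteq> {l \<in> L. g j \<in> l}"
proof -
  have lines: "inj_on (\<lambda>(i, j). line_through L {f i, g j}) ({..<a} \<times> {..<b})"
    using fg unfolding Kab_placement_def by blast
  show "inj_on (\<lambda>i. line_through L {f i, g j}) {..<a}"
  proof (rule inj_onI)
    fix i i' assume "i \<in> {..<a}" "i' \<in> {..<a}"
      and "line_through L {f i, g j} = line_through L {f i', g j}"
    then show "i = i'"
      using inj_onD[OF lines, of "(i, j)" "(i', j)"] \<open>j < b\<close> by simp
  qed
  show "(\<lambda>i. line_through L {f i, g j}) ` {..<a} \<subseteq> {l \<in> L. g j \<in> l}"
  proof (rule image_subsetI)
    fix i assume "i \<in> {..<a}"
    with fg \<open>j < b\<close> have "f i \<in> P" "g j \<in> P" "f i \<noteq> g j"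
      unfolding Kab_placement_def by auto
    then show "line_through L {f i, g j} \<in> {l \<in> L. g j \<in> l}"
      using line_through_in_lines by simp
  qed
qed

lemma Kab_placement_le:
  assumes "Kab_placement P L a b f g" "0 < b"
  shows "a \<le> q + 1"
proof -
  have "g 0 \<in> P"
    using assms unfolding Kab_placement_def by auto
  have "card {..<a} \<le> card {l \<in> L. g 0 \<in> l}"
    using Kab_placement_lines_through_g[OF assms] finite_lines by (intro card_inj_on_le) auto
  then show ?thesis
    using card_lines_through[OF \<open>g 0 \<in> P\<close>] by simp
qed

lemma Kab_placement_full_pencil:
  assumes fg: "Kab_placement P L (q + 1) b f g"
  shows "b \<le> 1"
proof (rule ccontr)
  assume "\<not> b \<le> 1"
  then have "0 < b" "1 < b" by simp_all
  have f_P: "\<And>i. i < q + 1 \<Longrightarrow> f i \<in> P" and g_P: "g 0 \<in> P" "g 1 \<in> P"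
    and fg_ne: "\<And>i j. i < q + 1 \<Longrightarrow> j < b \<Longrightarrow> f i \<noteq> g j"
    and "g 0 \<noteq> g 1"
    and lines: "inj_on (\<lambda>(i, j). line_through L {f i, g j}) ({..<q + 1} \<times> {..<b})"
    using fg \<open>1 < b\<close> unfolding Kab_placement_def by (auto dest: inj_onD)
  define n where "n = line_through L {g 0, g 1}"
  have n: "n \<in> L" "g 0 \<in> n" "g 1 \<in> n"
    unfolding n_def using line_through_in_lines[OF g_P \<open>g 0 \<noteq> g 1\<close>] by auto
  have "(\<lambda>i. line_through L {f i, g 0}) ` {..<q + 1} = {l \<in> L. g 0 \<in> l}"
    using Kab_placement_lines_through_g[OF fg \<open>0 < b\<close>] finite_lines card_lines_through[OF g_P(1)]
    by (intro card_subset_eq) (auto simp: card_image)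
  with n obtain i where i: "i < q + 1" "line_through L {f i, g 0} = n"
    by (metis (mono_tags, lifting) image_iff lessThan_iff mem_Collect_eq)
  then have "f i \<in> n"
    using line_through_in_lines(2)[OF f_P g_P(1)] fg_ne \<open>0 < b\<close> by blast
  then have "line_through L {f i, g 1} = n"
    using line_through_eq[OF f_P g_P(2)] i n fg_ne \<open>1 < b\<close> by simp
  with i have "(i, 0::nat) = (i, 1)"
    using inj_onD[OF lines, of "(i, 0)" "(i, 1)"] \<open>1 < b\<close> by simp
  then show False by simp
qed

lemma card_line_minus_point:
  assumes "l \<in> L" "z \<in> l"
  shows "card (l - {z}) = q"
  using assms card_line[OF assms(1)] by simp

lemma Kab_placement_on_two_lines:
  assumes "a \<le> q" "b \<le> q"
  shows "\<exists>f g. Kab_placement P L a b f g"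
proof -
  obtain l m where lm: "l \<in> L" "m \<in> L" "l \<noteq> m"
    using ex_two_lines by blast
  then obtain z where z: "z \<in> l" "z \<in> m"
    using ex1_common_point by blast
  have "finite (l - {z})" "finite (m - {z})"
    using lm line_subset_points finite_points finite_subset by blast+
  then obtain f g where f: "f ` {..<a} \<subseteq> l - {z}" "inj_on f {..<a}"
      and g: "g ` {..<b} \<subseteq> m - {z}" "inj_on g {..<b}"
    using card_le_inj[of "{..<a}" "l - {z}"] card_le_inj[of "{..<b}" "m - {z}"]
      card_line_minus_point lm z assms by auto
  have f_off: "f i \<notin> m" if "i < a" for i
    using lines_meet_once[OF lm] f z that by blast
  have g_off: "g j \<notin> l" if "j < b" for j
    using lines_meet_once[OF lm] g z that by blast
  have "inj_on (\<lambda>(i, j). line_through L {f i, g j}) ({..<a} \<times> {..<b})"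
  proof (rule inj_onI, clarify)
    fix i j i' j' assume "i < a" "j < b" "i' < a" "j' < b"
      and same: "line_through L {f i, g j} = line_through L {f i', g j'}"
    have P: "f i \<in> P" "g j \<in> P" "f i' \<in> P" "g j' \<in> P"
      using f g \<open>i < a\<close> \<open>j < b\<close> \<open>i' < a\<close> \<open>j' < b\<close> lm line_subset_points by blast+
    have "f i' \<noteq> g j'"
      using f_off \<open>i' < a\<close> g \<open>j' < b\<close> by blast
    then have "f i' \<in> line_through L {f i, g j}" "g j' \<in> line_through L {g j, f i}"
      using line_through_in_lines[OF P(3,4)] same by (simp_all add: insert_commute)
    then have "f i' = f i" "g j' = g j"
      using line_through_inter_line[OF lm(1), of "f i" "g j" "f i'"]
        line_through_inter_line[OF lm(2), of "g j" "f i" "g j'"]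
        f g f_off g_off P \<open>i < a\<close> \<open>j < b\<close> \<open>i' < a\<close> \<open>j' < b\<close> by blast+
    then show "i = i' \<and> j = j'"
      using inj_onD[OF f(2)] inj_onD[OF g(2)] \<open>i < a\<close> \<open>j < b\<close> \<open>i' < a\<close> \<open>j' < b\<close> by auto
  qed
  moreover have "f ` {..<a} \<subseteq> P" "g ` {..<b} \<subseteq> P"
    using f g lm line_subset_points by blast+
  moreover have "\<forall>i<a. \<forall>j<b. f i \<noteq> g j"
    using f_off g by blast
  ultimately have "Kab_placement P L a b f g"
    using f g unfolding Kab_placement_def by blast
  then show ?thesis by blast
qed

lemma Kab_placement_star: "\<exists>f g. Kab_placement P L 1 (q + 1) f g"
proof -
  obtain x where "x \<in> P"
    using ex_point by blast
  obtain \<L> where \<L>: "\<L> ` {..<q + 1} \<subseteq> {l \<in> L. x \<in> l}" "inj_on \<L> {..<q + 1}"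
    using card_le_inj[of "{..<q + 1}" "{l \<in> L. x \<in> l}"] finite_lines card_lines_through[OF \<open>x \<in> P\<close>]
    by auto
  have "\<forall>j<q + 1. \<exists>y. y \<in> \<L> j \<and> y \<noteq> x"
    using ex_other_point_on_line \<L>(1) by blast
  then obtain g where g: "\<And>j. j < q + 1 \<Longrightarrow> g j \<in> \<L> j \<and> g j \<noteq> x"
    by metis
  have g_P: "g j \<in> P" if "j < q + 1" for j
    using g \<L>(1) line_subset_points that by blast
  have line_g: "line_through L {x, g j} = \<L> j" if "j < q + 1" for j
    using line_through_eq[OF \<open>x \<in> P\<close> g_P] g \<L>(1) that by blast
  have "inj_on g {..<q + 1}"
  proof (rule inj_onI)
    fix j j' assume "j \<in> {..<q + 1}" "j' \<in> {..<q + 1}" "g j = g j'"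
    then show "j = j'"
      using line_g inj_onD[OF \<L>(2)] by (metis lessThan_iff)
  qed
  moreover have "inj_on (\<lambda>_. x) {..<1::nat}"
    by (simp add: inj_on_def)
  moreover have "inj_on (\<lambda>(i, j). line_through L {x, g j}) ({..<1::nat} \<times> {..<q + 1})"
    unfolding inj_on_def using line_g inj_onD[OF \<L>(2)] by (auto simp: less_one)
  ultimately have "Kab_placement P L 1 (q + 1) (\<lambda>_. x) g"
    using \<open>x \<in> P\<close> g g_P unfolding Kab_placement_def by auto
  then show ?thesis by blast
qed

lemma ex_Kab_placement_iff:
  assumes "0 < a" "0 < b"
  shows "(\<exists>f g. Kab_placement P L a b f g) \<longleftrightarrow> (a \<le> q \<and> b \<le> q) \<or> {a, b} = {1, q + 1}"
proof
  assume "\<exists>f g. Kab_placement P L a b f g"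
  then obtain f g where fg: "Kab_placement P L a b f g" and gf: "Kab_placement P L b a g f"
    using Kab_placement_swap by blast
  have "a \<le> q + 1" "b \<le> q + 1"
    using Kab_placement_le[OF fg] Kab_placement_le[OF gf] assms by simp_all
  moreover have "a = q + 1 \<Longrightarrow> b = 1" "b = q + 1 \<Longrightarrow> a = 1"
    using Kab_placement_full_pencil fg gf assms by force+
  ultimately show "(a \<le> q \<and> b \<le> q) \<or> {a, b} = {1, q + 1}"
    by (cases "a = q + 1"; cases "b = q + 1") auto
next
  assume "(a \<le> q \<and> b \<le> q) \<or> {a, b} = {1, q + 1}"
  then consider "a \<le> q" "b \<le> q" | "a = 1" "b = q + 1" | "a = q + 1" "b = 1"
    by (auto simp: doubleton_eq_iff)
  then show "\<exists>f g. Kab_placement P L a b f g"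
    using Kab_placement_on_two_lines Kab_placement_star Kab_placement_swap by cases blast+
qed

end

theorem theorem3p2:
  fixes P :: "'p set" and L :: "'p set set" and q a b :: nat
  assumes "projective_plane P L q" and "a > 0" and "b > 0"
  shows "graph_embeds (Kab_vertices a b) (Kab_edges a b) P L \<longleftrightarrow>
           ((a \<le> q \<and> b \<le> q) \<or> {a, b} = {1, q + 1})"
proof -
  interpret finite_projective_plane P L q
    using assms(1) finite_projective_plane_iff by blast
  show ?thesis
    unfolding graph_embeds_Kab_iff using ex_Kab_placement_iff[OF assms(2,3)] .
qed

end
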